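(* Let $S\subseteq\mathbb{R}^n\times\mathbb{R}^m$ be convex, let (CP) be bounded and fix $p\in[1,\infty]$. If $\bar S\subseteq S$ is a finite $\epsilon$-solution of (CP), then $\bar S$ is a Hausdorff-type finite $(\|Q\|\epsilon)$-solution of (MOCP), where $\|Q\|=(m^{p-1}+1)^{1/p}$ is the operator norm of $Q$ induced by the $p$-norms (equal to $m$ for $p=\infty$).
   Context: $\|\cdot\|$ is the $p$-norm, $B_\epsilon$ its closed $\epsilon$-ball. (CP): compute $Y=\{y:\exists x,(x,y)\in S\}$; bounded means $Y\subseteq B_K$ for some $K$; a nonempty finite $\bar S\subseteq S$ is a finite $\epsilon$-solution if $Y\subseteq\operatorname{conv}\operatorname{proj}_y[\bar S]+B_\epsilon$. $P(x,y)=(y,-\mathbf{1}^\top y)$, $Qy=(y,-\mathbf{1}^\top y)$, with $\mathbf{1}\in\mathbb{R}^m$ all-ones. (MOCP): minimize $P(x,y)$ w.r.t. $\le_{\mathbb{R}^{m+1}_+}$ over $(x,y)\in S$, upper image $\mathcal{P}=\operatorname{cl}(P[S]+\mathbb{R}^{m+1}_+)$. Hausdorff distance $d_H(A_1,A_2)=\max\{\sup_{a_1\in A_1}\inf_{a_2\in A_2}\|a_1-a_2\|,\sup_{a_2\in A_2}\inf_{a_1\in A_1}\|a_1-a_2\|\}$. A nonempty finite $\bar S\subseteq S$ is a Hausdorff-type finite $\epsilon$-solution of (MOCP) if $d_H(\mathcal{P},\operatorname{conv}P[\bar S]+\mathbb{R}^{m+1}_+)\le\epsilon$. *)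

theory Defs
  imports "HOL-Analysis.Analysis" "HOL-Library.Extended_Real"
begin

definition lpnorm :: "ereal \<Rightarrow> 'i set \<Rightarrow> ('i \<Rightarrow> real) \<Rightarrow> real" where
  "lpnorm p I f =
     (if p = \<infinity> then (if I = {} then 0 else Max ((\<lambda>i. \<bar>f i\<bar>) ` I))
      else (\<Sum>i\<in>I. \<bar>f i\<bar> powr real_of_ereal p) powr (1 / real_of_ereal p))"

definition pnorm :: "ereal \<Rightarrow> real^'k \<Rightarrow> real" where
  "pnorm p x = lpnorm p UNIV (\<lambda>i. x $ i)"

text \<open>p-norm on R^(m+1), represented as (real^'m) \<times> real (last coordinate separate).\<close>
definition pnorm1 :: "ereal \<Rightarrow> (real^'m) \<times> real \<Rightarrow> real" where
  "pnorm1 p z = lpnorm p UNIV (\<lambda>i::'m option. case i of None \<Rightarrow> snd z | Some j \<Rightarrow> fst z $ j)"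

definition pball :: "ereal \<Rightarrow> real \<Rightarrow> (real^'k) set" where
  "pball p e = {z. pnorm p z \<le> e}"

definition msum :: "'a::plus set \<Rightarrow> 'a set \<Rightarrow> 'a set" where
  "msum A B = {a + b | a b. a \<in> A \<and> b \<in> B}"

definition Yset :: "((real^'n) \<times> (real^'m)) set \<Rightarrow> (real^'m) set" where
  "Yset S = {y. \<exists>x. (x, y) \<in> S}"

definition CP_bounded :: "ereal \<Rightarrow> ((real^'n) \<times> (real^'m)) set \<Rightarrow> bool" where
  "CP_bounded p S \<longleftrightarrow> (\<exists>K. Yset S \<subseteq> pball p K)"

definition finite_eps_solution_CP ::
  "ereal \<Rightarrow> ((real^'n) \<times> (real^'m)) set \<Rightarrow> real \<Rightarrow> ((real^'n) \<times> (real^'m)) set \<Rightarrow> bool" where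
  "finite_eps_solution_CP p S e Sb \<longleftrightarrow>
     Sb \<noteq> {} \<and> finite Sb \<and> Sb \<subseteq> S \<and>
     Yset S \<subseteq> msum (convex hull (snd ` Sb)) (pball p e)"

definition Pobj :: "(real^'n) \<times> (real^'m) \<Rightarrow> (real^'m) \<times> real" where
  "Pobj z = (snd z, - (\<Sum>i\<in>UNIV. snd z $ i))"

definition orthant :: "((real^'m) \<times> real) set" where
  "orthant = {z. (\<forall>i. 0 \<le> fst z $ i) \<and> 0 \<le> snd z}"

definition upper_image :: "((real^'n) \<times> (real^'m)) set \<Rightarrow> ((real^'m) \<times> real) set" where
  "upper_image S = closure (msum (Pobj ` S) orthant)"

definition hausdorff_p :: "ereal \<Rightarrow> ((real^'m) \<times> real) set \<Rightarrow> ((real^'m) \<times> real) set \<Rightarrow> ereal" where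
  "hausdorff_p p A B =
     max (SUP a\<in>A. INF b\<in>B. ereal (pnorm1 p (a - b)))
         (SUP b\<in>B. INF a\<in>A. ereal (pnorm1 p (a - b)))"

definition hausdorff_eps_solution_MOCP ::
  "ereal \<Rightarrow> ((real^'n) \<times> (real^'m)) set \<Rightarrow> real \<Rightarrow> ((real^'n) \<times> (real^'m)) set \<Rightarrow> bool" where
  "hausdorff_eps_solution_MOCP p S e Sb \<longleftrightarrow>
     Sb \<noteq> {} \<and> finite Sb \<and> Sb \<subseteq> S \<and>
     hausdorff_p p (upper_image S) (msum (convex hull (Pobj ` Sb)) orthant) \<le> ereal e"

definition Qnorm :: "ereal \<Rightarrow> 'm itself \<Rightarrow> real" where
  "Qnorm p _ = (if p = \<infinity> then real CARD('m)
     else (real CARD('m) powr (real_of_ereal p - 1) + 1) powr (1 / real_of_ereal p))"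

end

theory Submission imports Defs begin

text \<open>Since P(x,y) = Q y with Q linear, P maps the convex hull of the finite solution into
  P[S], so conv P[Sb] + orthant lies in the upper image. Conversely every y in Y is c + z with c in
  the convex hull of the y-parts of Sb and z in the \<epsilon>-ball, so P(x,y) = Q c + Q z with
  Q c in conv P[Sb] and Q z in the (Qnorm * \<epsilon>)-ball; as a compact set plus a closed set is
  closed, this inclusion survives taking the closure. The operator-norm bound for Q is the
  power-mean inequality (\<Sum> |z i|)^q \<le> m^(q-1) * \<Sum> |z i|^q.\<close>

section \<open>Power means\<close>

lemma convex_on_powr_nonneg:
  assumes "(q::real) \<ge> 1" shows "convex_on {0..} (\<lambda>x. x powr q)"
proof (rule convex_on_linorderI)
  fix t x y :: real
  assume t: "0 < t" "t < 1" and xy: "x \<in> {0..}" "y \<in> {0..}" "x < y"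
  show "((1 - t) *\<^sub>R x + t *\<^sub>R y) powr q \<le> (1 - t) * x powr q + t * y powr q"
  proof (cases "x = 0")
    case True
    have "(t * y) powr q = t powr q * y powr q" using t xy by (simp add: powr_mult)
    also have "t powr q \<le> t powr 1" using t assms by (intro powr_mono') auto
    then have "t powr q * y powr q \<le> t * y powr q" using t by (simp add: mult_right_mono)
    finally show ?thesis using True assms by simp
  next
    case False
    with xy have "x \<in> {0<..}" "y \<in> {0<..}" by auto
    then show ?thesis using convex_onD[OF powr_convex[OF assms], of t x y] t by simp
  qed
qed (simp add: convex_real_interval)

lemma sum_powr_le_card_powr_sum:
  fixes f :: "'i \<Rightarrow> real"
  assumes "finite I" "q \<ge> 1" "\<And>i. i \<in> I \<Longrightarrow> 0 \<le> f i"
  shows "(\<Sum>i\<in>I. f i) powr q \<le> real (card I) powr (q - 1) * (\<Sum>i\<in>I. f i powr q)"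
proof (cases "I = {}")
  case False
  define m where "m = real (card I)"
  have m: "m > 0" using assms(1) False unfolding m_def by (simp add: card_gt_0_iff)
  have "(\<Sum>i\<in>I. (1/m) *\<^sub>R f i) powr q \<le> (\<Sum>i\<in>I. (1/m) * f i powr q)"
    using convex_on_sum[OF assms(1) False convex_on_powr_nonneg[OF assms(2)], of "\<lambda>_. 1/m" f]
      assms(1,3) m False by (simp add: m_def)
  then have jensen: "((1/m) * (\<Sum>i\<in>I. f i)) powr q \<le> (1/m) * (\<Sum>i\<in>I. f i powr q)"
    by (simp add: sum_distrib_left)
  have sum_ge0: "0 \<le> (\<Sum>i\<in>I. f i)" using assms(3) by (simp add: sum_nonneg)
  have "(\<Sum>i\<in>I. f i) powr q = m powr q * ((1/m) * (\<Sum>i\<in>I. f i)) powr q"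
    using m sum_ge0 by (simp add: powr_mult [symmetric])
  also have "\<dots> \<le> m powr q * ((1/m) * (\<Sum>i\<in>I. f i powr q))"
    using jensen by (intro mult_left_mono) auto
  also have "\<dots> = m powr (q - 1) * (\<Sum>i\<in>I. f i powr q)"
    using m by (simp add: powr_diff)
  finally show ?thesis unfolding m_def .
qed simp

lemma powr_inverse_le_iff:
  fixes s K q :: real
  assumes "0 \<le> s" "0 \<le> K" "q > 0"
  shows "s powr (1/q) \<le> K \<longleftrightarrow> s \<le> K powr q"
proof
  assume "s powr (1/q) \<le> K"
  then have "(s powr (1/q)) powr q \<le> K powr q" using assms by (intro powr_mono2) auto
  then show "s \<le> K powr q" using assms by (simp add: powr_powr)
next
  assume "s \<le> K powr q"
  then have "s powr (1/q) \<le> (K powr q) powr (1/q)" using assms by (intro powr_mono2) auto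
  then show "s powr (1/q) \<le> K" using assms by (simp add: powr_powr)
qed

section \<open>The p-norm\<close>

lemma one_le_real_of_ereal:
  assumes "1 \<le> p" "p \<noteq> \<infinity>"
  shows "1 \<le> real_of_ereal p"
  using assms by (cases p) auto

lemma lpnorm_finite_le_iff:
  assumes "1 \<le> p" "p \<noteq> \<infinity>" "0 \<le> K"
  shows "lpnorm p I f \<le> K \<longleftrightarrow> (\<Sum>i\<in>I. \<bar>f i\<bar> powr real_of_ereal p) \<le> K powr real_of_ereal p"
  unfolding lpnorm_def using assms one_le_real_of_ereal[OF assms(1,2)]
  by (simp add: powr_inverse_le_iff sum_nonneg)

lemma lpnorm_infinity_le_iff:
  assumes "finite I" "0 \<le> K"
  shows "lpnorm \<infinity> I f \<le> K \<longleftrightarrow> (\<forall>i\<in>I. \<bar>f i\<bar> \<le> K)"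
  unfolding lpnorm_def using assms by auto

lemma abs_le_lpnorm:
  assumes "finite I" "i \<in> I" "1 \<le> p"
  shows "\<bar>f i\<bar> \<le> lpnorm p I f"
proof (cases "p = \<infinity>")
  case True
  then show ?thesis using assms(1,2) by (auto simp: lpnorm_def)
next
  case False
  define q where "q = real_of_ereal p"
  have q: "1 \<le> q" unfolding q_def using one_le_real_of_ereal[OF assms(3) False] .
  have "\<bar>f i\<bar> = (\<bar>f i\<bar> powr q) powr (1/q)" using q by (simp add: powr_powr)
  also have "\<dots> \<le> (\<Sum>j\<in>I. \<bar>f j\<bar> powr q) powr (1/q)"
    using assms(1,2) q by (intro powr_mono2 member_le_sum) auto
  finally show ?thesis using False by (simp add: lpnorm_def q_def)
qed

lemma lpnorm_nonneg:
  assumes "finite I" "1 \<le> p"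
  shows "0 \<le> lpnorm p I f"
proof (cases "I = {}")
  case True
  then show ?thesis by (simp add: lpnorm_def)
next
  case False
  then obtain i where "i \<in> I" by blast
  then show ?thesis using abs_le_lpnorm[OF assms(1) _ assms(2)] abs_ge_zero order_trans by blast
qed

lemma closed_lpnorm_sublevel:
  fixes F :: "'a::topological_space \<Rightarrow> 'i \<Rightarrow> real"
  assumes "finite I" "1 \<le> p" "0 \<le> K" "\<And>i. i \<in> I \<Longrightarrow> continuous_on UNIV (\<lambda>w. F w i)"
  shows "closed {w. lpnorm p I (F w) \<le> K}"
proof (cases "p = \<infinity>")
  case True
  have "{w. lpnorm p I (F w) \<le> K} = (\<Inter>i\<in>I. {w. \<bar>F w i\<bar> \<le> K})"
    using True lpnorm_infinity_le_iff[OF assms(1,3)] by auto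
  then show ?thesis
    using assms(4) by (auto intro!: closed_INT closed_Collect_le continuous_intros)
next
  case False
  define q where "q = real_of_ereal p"
  have q: "0 < q" using one_le_real_of_ereal[OF assms(2) False] unfolding q_def by simp
  have "continuous_on UNIV (\<lambda>w. \<bar>F w i\<bar> powr q)" if "i \<in> I" for i
    using assms(4)[OF that] q by (intro continuous_on_powr' continuous_intros) auto
  moreover have "{w. lpnorm p I (F w) \<le> K} = {w. (\<Sum>i\<in>I. \<bar>F w i\<bar> powr q) \<le> K powr q}"
    using lpnorm_finite_le_iff[OF assms(2) False assms(3)] unfolding q_def by auto
  ultimately show ?thesis
    by (auto intro!: closed_Collect_le continuous_on_sum)
qed

lemma pnorm_nonneg: "1 \<le> p \<Longrightarrow> 0 \<le> pnorm p z"
  unfolding pnorm_def by (simp add: lpnorm_nonneg)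

lemma pnorm1_zero: "pnorm1 p (0 :: (real^'m) \<times> real) = 0"
  unfolding pnorm1_def lpnorm_def by (auto simp: image_constant_conv UNIV_option_conv sum.reindex)

lemma compact_pnorm1_ball:
  assumes "1 \<le> p" "0 \<le> K"
  shows "compact {w :: (real^'m) \<times> real. pnorm1 p w \<le> K}"
proof -
  let ?B = "{w :: (real^'m) \<times> real. pnorm1 p w \<le> K}"
  let ?F = "\<lambda>(w :: (real^'m) \<times> real) i. case i of None \<Rightarrow> snd w | Some j \<Rightarrow> fst w $ j"
  have pnorm1_eq: "pnorm1 p w = lpnorm p UNIV (?F w)" for w
    by (simp add: pnorm1_def)
  have "bounded ?B"
  proof (rule boundedI)
    fix w :: "(real^'m) \<times> real"
    assume "w \<in> ?B"
    then have bnd: "\<bar>?F w i\<bar> \<le> K" for i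
      using abs_le_lpnorm[OF _ _ assms(1), of UNIV i "?F w"] by (simp add: pnorm1_eq)
    have "norm w \<le> norm (fst w) + norm (snd w)"
      using norm_Pair_le[of "fst w" "snd w"] by simp
    also have "norm (fst w) \<le> (\<Sum>j\<in>UNIV. \<bar>fst w $ j\<bar>)" by (rule norm_le_l1_cart)
    also have "\<dots> \<le> (\<Sum>j\<in>(UNIV::'m set). K)" using bnd[of "Some _"] by (intro sum_mono) simp
    finally show "norm w \<le> real CARD('m) * K + K" using bnd[of None] by simp
  qed
  moreover have "continuous_on UNIV (\<lambda>w. ?F w i)" for i
    by (cases i) (auto intro!: continuous_intros)
  then have "closed ?B"
    unfolding pnorm1_eq by (intro closed_lpnorm_sublevel assms) auto
  ultimately show ?thesis by (simp add: compact_eq_bounded_closed)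
qed

section \<open>The linear map Q\<close>

definition Qmap :: "real^'m \<Rightarrow> (real^'m) \<times> real" where
  "Qmap y = (y, - (\<Sum>i\<in>UNIV. y $ i))"

lemma Pobj_eq_Qmap_snd: "Pobj z = Qmap (snd z)"
  by (simp add: Pobj_def Qmap_def)

lemma linear_Qmap: "linear Qmap"
  by (rule linearI) (auto simp: Qmap_def sum.distrib sum_distrib_left sum_negf)

lemma linear_Pobj: "linear (Pobj :: (real^'n) \<times> (real^'m) \<Rightarrow> _)"
proof -
  have Pobj_eq: "(Pobj :: (real^'n) \<times> (real^'m) \<Rightarrow> _) = Qmap \<circ> snd"
    by (rule ext) (simp add: Pobj_eq_Qmap_snd)
  show ?thesis unfolding Pobj_eq by (rule linear_compose[OF linear_snd linear_Qmap])
qed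

lemma Qnorm_nonneg: "0 \<le> Qnorm p t"
  by (simp add: Qnorm_def)

lemma pnorm1_Qmap_le:
  fixes z :: "real^'m"
  assumes "1 \<le> p"
  shows "pnorm1 p (Qmap z) \<le> Qnorm p TYPE('m) * pnorm p z"
proof (cases "p = \<infinity>")
  case True
  define M where "M = pnorm \<infinity> z"
  have M0: "0 \<le> M" unfolding M_def using pnorm_nonneg[of \<infinity>] by simp
  have comp: "\<bar>z $ j\<bar> \<le> M" for j
    unfolding M_def pnorm_def by (rule abs_le_lpnorm) auto
  have "\<bar>\<Sum>i\<in>UNIV. z $ i\<bar> \<le> (\<Sum>i\<in>UNIV. \<bar>z $ i\<bar>)" by (rule sum_abs)
  also have "\<dots> \<le> (\<Sum>i\<in>(UNIV::'m set). M)" by (intro sum_mono comp)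
  finally have "\<bar>\<Sum>i\<in>UNIV. z $ i\<bar> \<le> real CARD('m) * M" by simp
  moreover have "\<bar>z $ j\<bar> \<le> real CARD('m) * M" for j
    using comp[of j] mult_right_mono[of 1 "real CARD('m)" M] M0 by simp
  ultimately have "pnorm1 \<infinity> (Qmap z) \<le> real CARD('m) * M"
    unfolding pnorm1_def Qmap_def using M0
    by (subst lpnorm_infinity_le_iff) (auto split: option.split)
  then show ?thesis using True by (simp add: Qnorm_def M_def)
next
  case False
  define q where "q = real_of_ereal p"
  define m where "m = real CARD('m)"
  define T where "T = (\<Sum>j\<in>UNIV. \<bar>z $ j\<bar> powr q)"
  have q: "1 \<le> q" unfolding q_def using one_le_real_of_ereal[OF assms False] .
  have T0: "0 \<le> T" unfolding T_def by (simp add: sum_nonneg)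
  have "\<bar>\<Sum>i\<in>UNIV. z $ i\<bar> powr q \<le> (\<Sum>i\<in>UNIV. \<bar>z $ i\<bar>) powr q"
    using q by (intro powr_mono2 sum_abs) auto
  also have "\<dots> \<le> m powr (q - 1) * T"
    unfolding m_def T_def by (rule sum_powr_le_card_powr_sum) (use q in auto)
  finally have sum_bound: "\<bar>\<Sum>i\<in>UNIV. z $ i\<bar> powr q \<le> m powr (q - 1) * T" .
  have "pnorm1 p (Qmap z) = (\<bar>\<Sum>i\<in>UNIV. z $ i\<bar> powr q + T) powr (1/q)"
    using False
    by (simp add: pnorm1_def lpnorm_def Qmap_def UNIV_option_conv sum.reindex q_def T_def)
  also have "\<dots> \<le> ((m powr (q - 1) + 1) * T) powr (1/q)"
    using sum_bound q T0 by (intro powr_mono2) (auto simp: algebra_simps)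
  also have "\<dots> = (m powr (q - 1) + 1) powr (1/q) * T powr (1/q)"
    using T0 by (simp add: powr_mult)
  also have "\<dots> = Qnorm p TYPE('m) * pnorm p z"
    using False by (simp add: Qnorm_def pnorm_def lpnorm_def q_def T_def m_def)
  finally show ?thesis .
qed

section \<open>Minkowski sums and the upper image\<close>

lemma msum_commute: "msum A B = msum B (A :: 'a::ab_semigroup_add set)"
  unfolding msum_def by (auto; metis add.commute)

lemma closed_msum_compact_closed:
  fixes A B :: "'a::real_normed_vector set"
  assumes "compact A" "closed B"
  shows "closed (msum A B)"
proof -
  have "msum A B = (\<Union>x\<in>A. \<Union>y\<in>B. {x + y})" unfolding msum_def by blast
  then show ?thesis using compact_closed_sums[OF assms] by simp
qed

lemma closed_orthant: "closed orthant"
proof -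
  have "orthant = {z::(real^'m) \<times> real. \<forall>i. 0 \<le> fst z $ i} \<inter> {z. 0 \<le> snd z}"
    by (auto simp: orthant_def)
  also have "closed \<dots>"
    by (intro closed_Int closed_Collect_all closed_Collect_le continuous_intros)
  finally show ?thesis .
qed

lemma msum_hull_Pobj_subset_upper_image:
  assumes "convex S" "Sb \<subseteq> S"
  shows "msum (convex hull (Pobj ` Sb)) orthant \<subseteq> upper_image S"
proof -
  have "convex hull (Pobj ` Sb) = Pobj ` (convex hull Sb)"
    by (simp add: convex_hull_linear_image linear_Pobj)
  also have "\<dots> \<subseteq> Pobj ` S" using assms by (intro image_mono hull_minimal) auto
  finally have "msum (convex hull (Pobj ` Sb)) orthant \<subseteq> msum (Pobj ` S) orthant"
    unfolding msum_def by blast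
  then show ?thesis unfolding upper_image_def using closure_subset by blast
qed

lemma upper_image_subset_msum_ball:
  fixes S Sb :: "((real^'n) \<times> (real^'m)) set"
  assumes "1 \<le> p" "0 \<le> e" "finite Sb"
    and Y: "Yset S \<subseteq> msum (convex hull (snd ` Sb)) (pball p e)"
  shows "upper_image S \<subseteq>
    msum (msum (convex hull (Pobj ` Sb)) orthant) {w. pnorm1 p w \<le> Qnorm p TYPE('m) * e}"
    (is "_ \<subseteq> msum ?B ?Ball")
proof -
  have "closed (msum ?B ?Ball)"
  proof -
    have "closed ?B"
      using assms(3) closed_orthant
      by (intro closed_msum_compact_closed compact_convex_hull finite_imp_compact) simp_all
    then show ?thesis
      using compact_pnorm1_ball[OF assms(1) mult_nonneg_nonneg[OF Qnorm_nonneg assms(2)]]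
      by (subst msum_commute) (rule closed_msum_compact_closed)
  qed
  moreover have "msum (Pobj ` S) orthant \<subseteq> msum ?B ?Ball"
  proof
    fix a assume "a \<in> msum (Pobj ` S) orthant"
    then obtain xy r where xy: "xy \<in> S" and r: "r \<in> orthant" and a: "a = Pobj xy + r"
      unfolding msum_def by blast
    have "snd xy \<in> Yset S" using xy unfolding Yset_def by (cases xy) force
    then obtain c z where c: "c \<in> convex hull (snd ` Sb)" and z: "pnorm p z \<le> e"
      and y: "snd xy = c + z"
      using Y unfolding msum_def pball_def by blast
    have "Qmap c \<in> Qmap ` (convex hull (snd ` Sb))" using c by blast
    also have "\<dots> = convex hull (Qmap ` snd ` Sb)" by (rule convex_hull_linear_image[OF linear_Qmap])
    also have "Qmap ` snd ` Sb = Pobj ` Sb" by (auto simp: Pobj_eq_Qmap_snd)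
    finally have "Qmap c + r \<in> ?B"
      using r unfolding msum_def by blast
    moreover have "Qmap z \<in> ?Ball"
      using order_trans[OF pnorm1_Qmap_le[OF assms(1)] mult_left_mono[OF z Qnorm_nonneg]] by simp
    moreover have "a = (Qmap c + r) + Qmap z"
      using a y linear_add[OF linear_Qmap, of c z] by (simp add: Pobj_eq_Qmap_snd algebra_simps)
    ultimately show "a \<in> msum ?B ?Ball" unfolding msum_def by blast
  qed
  ultimately show ?thesis unfolding upper_image_def by (rule closure_minimal[rotated])
qed

lemma hausdorff_p_le:
  assumes "0 \<le> K" "B \<subseteq> A" "A \<subseteq> msum B {w. pnorm1 p w \<le> K}"
  shows "hausdorff_p p A B \<le> ereal K"
proof -
  have "(INF b\<in>B. ereal (pnorm1 p (a - b))) \<le> ereal K" if "a \<in> A" for a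
  proof -
    obtain b w where "b \<in> B" "pnorm1 p w \<le> K" "a = b + w"
      using assms(3) \<open>a \<in> A\<close> unfolding msum_def by blast
    then show ?thesis by (intro INF_lower2[of b]) auto
  qed
  moreover have "(INF a\<in>A. ereal (pnorm1 p (a - b))) \<le> ereal K" if "b \<in> B" for b
    using assms(1,2) that by (intro INF_lower2[of b]) (auto simp: pnorm1_zero)
  ultimately show ?thesis
    unfolding hausdorff_p_def by (auto intro: SUP_least)
qed

lemma finite_eps_solution_CP_nonneg:
  fixes S Sb :: "((real^'n) \<times> (real^'m)) set"
  assumes "1 \<le> p" "finite_eps_solution_CP p S e Sb"
  shows "0 \<le> e"
proof -
  obtain s where s: "s \<in> Sb" "Sb \<subseteq> S"
    and Y: "Yset S \<subseteq> msum (convex hull (snd ` Sb)) (pball p e)"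
    using assms(2) unfolding finite_eps_solution_CP_def by blast
  then have "snd s \<in> Yset S" unfolding Yset_def by (cases s) force
  then obtain z :: "real^'m" where "z \<in> pball p e"
    using Y unfolding msum_def by blast
  then show ?thesis using pnorm_nonneg[OF assms(1), of z] unfolding pball_def by simp
qed

theorem mainTheorem16:
  fixes S Sb :: "((real^'n) \<times> (real^'m)) set" and p :: ereal and e :: real
  assumes "convex S"
    and "1 \<le> p"
    and "CP_bounded p S"
    and "finite_eps_solution_CP p S e Sb"
  shows "hausdorff_eps_solution_MOCP p S (Qnorm p TYPE('m) * e) Sb"
proof -
  have Sb: "Sb \<noteq> {}" "finite Sb" "Sb \<subseteq> S"
    and Y: "Yset S \<subseteq> msum (convex hull (snd ` Sb)) (pball p e)"
    using assms(4) unfolding finite_eps_solution_CP_def by auto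
  have e: "0 \<le> e" using finite_eps_solution_CP_nonneg[OF assms(2,4)] .
  show ?thesis
    unfolding hausdorff_eps_solution_MOCP_def
    using Sb hausdorff_p_le[OF mult_nonneg_nonneg[OF Qnorm_nonneg e]
        msum_hull_Pobj_subset_upper_image[OF assms(1) Sb(3)]
        upper_image_subset_msum_ball[OF assms(2) e Sb(2) Y]]
    by simp
qed

end
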